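(* Let $n\ge1$, $m\in\mathbb{Z}_{>0}$, $q,q_0,q_1\in(-1,1)$. Let $\boldsymbol{\xi}\in\mathbb{R}^n$ with $\xi_j\notin\pi\mathbb{Z}$ and $\xi_j\pm\xi_k\notin2\pi\mathbb{Z}$ ($j\ne k$) satisfy, for $j=1,\dots,n$, \[ e^{2i(m+1)\xi_j}=\frac{1-q_0e^{i\xi_j}}{e^{i\xi_j}-q_0}\cdot\frac{1-q_1e^{i\xi_j}}{e^{i\xi_j}-q_1}\prod_{k\ne j}\frac{1-qe^{i(\xi_j+\xi_k)}}{e^{i(\xi_j+\xi_k)}-q}\cdot\frac{1-qe^{i(\xi_j-\xi_k)}}{e^{i(\xi_j-\xi_k)}-q}. \] Then for every $\mu\in\mathbb{Z}^n$ with $\mu_1=m+1$, $P_{\texttt{b};\mu}(\boldsymbol{\xi};q,q_0)=q_1\,P_{\texttt{b};\mu-e_1}(\boldsymbol{\xi};q,q_0)$.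
   Context: $e_1,\dots,e_n$ is the standard basis of $\mathbb{R}^n$. $C_{\texttt{b}}(\boldsymbol{\xi};q,q_0)=\prod_{j=1}^n\frac{1-q_0e^{-i\xi_j}}{1-e^{-2i\xi_j}}\prod_{1\le j<k\le n}\frac{1-qe^{-i(\xi_j-\xi_k)}}{1-e^{-i(\xi_j-\xi_k)}}\cdot\frac{1-qe^{-i(\xi_j+\xi_k)}}{1-e^{-i(\xi_j+\xi_k)}}$ and $P_{\texttt{b};\mu}(\boldsymbol{\xi};q,q_0)=\sum_{\sigma\in S_n}\sum_{\epsilon\in\{1,-1\}^n}C_{\texttt{b}}(\epsilon_1\xi_{\sigma_1},\dots,\epsilon_n\xi_{\sigma_n};q,q_0)\exp(i\sum_j\epsilon_j\xi_{\sigma_j}\mu_j)$. *)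

theory Defs
  imports Complex_Main "HOL-Combinatorics.Permutations" "HOL-Library.FuncSet"
begin

text \<open>Indices are 0-based: the paper's coordinate j (1..n) is j-1 here.
  Vectors in R^n / Z^n are functions on nat, only the values on {..<n} matter.\<close>

definition Cb :: "nat \<Rightarrow> (nat \<Rightarrow> real) \<Rightarrow> real \<Rightarrow> real \<Rightarrow> complex" where
  "Cb n \<xi> q q0 =
     (\<Prod>j<n. (1 - of_real q0 * exp (- \<i> * of_real (\<xi> j))) / (1 - exp (- 2 * \<i> * of_real (\<xi> j))))
   * (\<Prod>j<n. \<Prod>k\<in>{j<..<n}.
        ((1 - of_real q * exp (- \<i> * of_real (\<xi> j - \<xi> k))) / (1 - exp (- \<i> * of_real (\<xi> j - \<xi> k))))
      * ((1 - of_real q * exp (- \<i> * of_real (\<xi> j + \<xi> k))) / (1 - exp (- \<i> * of_real (\<xi> j + \<xi> k)))))"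

definition Pb :: "nat \<Rightarrow> (nat \<Rightarrow> int) \<Rightarrow> (nat \<Rightarrow> real) \<Rightarrow> real \<Rightarrow> real \<Rightarrow> complex" where
  "Pb n \<mu> \<xi> q q0 =
     (\<Sum>\<sigma>\<in>{\<sigma>. \<sigma> permutes {..<n}}. \<Sum>\<epsilon>\<in>{..<n} \<rightarrow>\<^sub>E {1, -1::real}.
        Cb n (\<lambda>j. \<epsilon> j * \<xi> (\<sigma> j)) q q0
        * exp (\<i> * of_real (\<Sum>j<n. \<epsilon> j * \<xi> (\<sigma> j) * of_int (\<mu> j))))"

end

theory Submission
  imports Defs "HOL-Analysis.Complex_Transcendental" "HOL-Library.Disjoint_Sets"
begin

text \<open>
  Fix \<open>\<sigma>\<close>, write \<open>x j = \<epsilon> j * \<xi> (\<sigma> j)\<close> and \<open>t = x 0\<close>. The summand of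
  \<open>P_\<mu> - q1 P_(\<mu>-e1)\<close> factors as \<open>\<Phi>(t) R\<close>, where \<open>R\<close> only depends on \<open>x 1, ..., x (n-1)\<close> and
  \<open>\<Phi>(t) = a(t) (e^(i(m+1)t) - q1 e^(imt)) \<Prod>k f(t - x k) f(t + x k)\<close>. Reflecting \<open>t \<mapsto> -t\<close>
  multiplies every two-body factor \<open>f\<close> by a scattering phase, and the Bethe equation for
  \<open>\<xi> (\<sigma> 0)\<close> says precisely that these phases, together with the reflection of the boundary
  factor \<open>a\<close>, turn \<open>\<Phi>(-t)\<close> into \<open>-\<Phi>(t)\<close>. So flipping the sign \<open>\<epsilon> 0\<close> is a sign-reversing
  involution of the sum over \<open>\<epsilon>\<close>, which therefore vanishes for every \<open>\<sigma>\<close>.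
\<close>

definition boundary_factor :: "real \<Rightarrow> real \<Rightarrow> complex" where
  "boundary_factor q0 s = (1 - of_real q0 * exp (- \<i> * of_real s)) / (1 - exp (- 2 * \<i> * of_real s))"

definition pair_factor :: "real \<Rightarrow> real \<Rightarrow> complex" where
  "pair_factor q s = (1 - of_real q * exp (- \<i> * of_real s)) / (1 - exp (- \<i> * of_real s))"

definition scattering :: "real \<Rightarrow> real \<Rightarrow> complex" where
  "scattering q s = (1 - of_real q * exp (\<i> * of_real s)) / (exp (\<i> * of_real s) - of_real q)"

definition pair_product :: "real \<Rightarrow> nat \<Rightarrow> (nat \<Rightarrow> real) \<Rightarrow> real \<Rightarrow> complex" where
  "pair_product q n y t = (\<Prod>k<n. pair_factor q (t - y k) * pair_factor q (t + y k))"

definition boundary_term :: "real \<Rightarrow> real \<Rightarrow> nat \<Rightarrow> real \<Rightarrow> complex" where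
  "boundary_term q0 q1 m t = boundary_factor q0 t *
     (exp (\<i> * of_real t) ^ Suc m - of_real q1 * exp (\<i> * of_real t) ^ m)"

definition plane_wave :: "nat \<Rightarrow> (nat \<Rightarrow> real) \<Rightarrow> (nat \<Rightarrow> int) \<Rightarrow> complex" where
  "plane_wave n x \<mu> = exp (\<i> * of_real (\<Sum>j<n. x j * of_int (\<mu> j)))"

lemma unit_minus_of_real_neq_0:
  fixes w :: complex
  assumes "norm w = 1" "\<bar>q\<bar> < 1"
  shows "w - of_real q \<noteq> 0"
proof
  assume "w - of_real q = 0"
  then have "norm w = \<bar>q\<bar>"
    by simp
  with assms show False
    by simp
qed

lemma exp_i_mult_of_nat: "exp (\<i> * of_real (t * of_int (int k))) = exp (\<i> * of_real t) ^ k"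
  by (simp add: ac_simps flip: exp_of_nat_mult)

lemma Cb_eq:
  "Cb n x q q0 = (\<Prod>j<n. boundary_factor q0 (x j))
     * (\<Prod>j<n. \<Prod>k\<in>{j<..<n}. pair_factor q (x j - x k) * pair_factor q (x j + x k))"
  by (simp add: Cb_def boundary_factor_def pair_factor_def)

lemma Cb_Suc:
  "Cb (Suc n) x q q0 =
     boundary_factor q0 (x 0) * pair_product q n (\<lambda>k. x (Suc k)) (x 0) * Cb n (\<lambda>k. x (Suc k)) q q0"
proof -
  have "{Suc j<..<Suc n} = Suc ` {j<..<n}" for j
    by (simp flip: atLeastSucLessThan_greaterThanLessThan)
  moreover have "{0<..<Suc n} = Suc ` {..<n}"
    by (auto simp: image_Suc_lessThan)
  ultimately show ?thesis
    unfolding Cb_eq pair_product_def prod.lessThan_Suc_shift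
    by (simp add: prod.reindex ac_simps del: prod.lessThan_Suc)
qed

lemma plane_wave_Suc:
  "plane_wave (Suc n) x \<mu> =
     exp (\<i> * of_real (x 0 * of_int (\<mu> 0))) * plane_wave n (\<lambda>k. x (Suc k)) (\<lambda>k. \<mu> (Suc k))"
  unfolding plane_wave_def sum.lessThan_Suc_shift by (simp add: distrib_left exp_add)

lemma Cb_mult_plane_wave_diff:
  assumes "\<mu> 0 = int m + 1"
  shows "Cb (Suc n) x q q0 *
      (plane_wave (Suc n) x \<mu> - of_real q1 * plane_wave (Suc n) x (\<mu>(0 := \<mu> 0 - 1)))
    = boundary_term q0 q1 m (x 0) * pair_product q n (\<lambda>k. x (Suc k)) (x 0)
      * (Cb n (\<lambda>k. x (Suc k)) q q0 * plane_wave n (\<lambda>k. x (Suc k)) (\<lambda>k. \<mu> (Suc k)))"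
proof -
  have "\<mu> 0 = int (Suc m)" "\<mu> 0 - 1 = int m"
    using assms by simp_all
  then show ?thesis
    unfolding Cb_Suc plane_wave_Suc boundary_term_def
    by (simp only: fun_upd_same fun_upd_other Suc_neq_Zero exp_i_mult_of_nat)
      (simp add: algebra_simps)
qed

lemma pair_factor_uminus:
  assumes "\<bar>q\<bar> < 1"
  shows "pair_factor q (- s) = - pair_factor q s * scattering q s"
proof -
  define w where "w = exp (\<i> * of_real s)"
  have w: "w \<noteq> 0" "w - of_real q \<noteq> 0"
    using unit_minus_of_real_neq_0[OF _ assms] by (auto simp: w_def)
  have inv: "exp (- \<i> * of_real s) = inverse w" "exp (- \<i> * of_real (- s)) = w"
    by (simp_all add: w_def flip: exp_minus)
  show ?thesis
  proof (cases "w = 1")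
    case True
    \<comment> \<open>both sides are \<open>x / 0 = 0\<close>\<close>
    then show ?thesis
      unfolding pair_factor_def w_def[symmetric] inv by simp
  next
    case False
    then have "(1 - of_real q * inverse w) / (1 - inverse w) = (w - of_real q) / (w - 1)"
      using w by (simp add: field_simps)
    with False w show ?thesis
      unfolding pair_factor_def scattering_def w_def[symmetric] inv
      by (simp add: divide_simps) (simp add: algebra_simps)
  qed
qed

lemma pair_product_uminus:
  assumes "\<bar>q\<bar> < 1"
  shows "pair_product q n y (- t) =
    pair_product q n y t * (\<Prod>k<n. scattering q (t + y k) * scattering q (t - y k))"
proof -
  have "pair_factor q (- t - u) * pair_factor q (- t + u) =
      pair_factor q (t - u) * pair_factor q (t + u) * (scattering q (t + u) * scattering q (t - u))"
    for u
    using pair_factor_uminus[OF assms, of "t + u"] pair_factor_uminus[OF assms, of "t - u"]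
    by (simp add: algebra_simps)
  then show ?thesis
    unfolding pair_product_def by (simp add: prod.distrib)
qed

lemma boundary_term_closed_form:
  fixes t :: real
  defines "z \<equiv> exp (\<i> * of_real t)"
  shows "boundary_term q0 q1 m t = - ((z - of_real q0) * (z - of_real q1) * z ^ Suc m / (1 - z\<^sup>2))"
    and "boundary_term q0 q1 m (- t)
           = (1 - of_real q0 * z) * (1 - of_real q1 * z) / ((1 - z\<^sup>2) * z ^ Suc m)"
proof -
  have z: "z \<noteq> 0"
    by (simp add: z_def)
  have exps: "exp (- \<i> * of_real t) = inverse z" "exp (- 2 * \<i> * of_real t) = inverse z ^ 2"
    "exp (- \<i> * of_real (- t)) = z" "exp (- 2 * \<i> * of_real (- t)) = z ^ 2"
    "exp (\<i> * of_real (- t)) = inverse z"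
    by (simp_all add: z_def power2_eq_square mult.assoc flip: exp_minus exp_add)
  have "inverse z ^ Suc m - of_real q1 * inverse z ^ m = (1 - of_real q1 * z) / z ^ Suc m"
    using z by (simp add: field_simps power_inverse)
  then show "boundary_term q0 q1 m (- t)
      = (1 - of_real q0 * z) * (1 - of_real q1 * z) / ((1 - z\<^sup>2) * z ^ Suc m)"
    unfolding boundary_term_def boundary_factor_def exps z_def[symmetric] by simp
  show "boundary_term q0 q1 m t = - ((z - of_real q0) * (z - of_real q1) * z ^ Suc m / (1 - z\<^sup>2))"
  proof (cases "z\<^sup>2 = 1")
    case True
    \<comment> \<open>both sides are \<open>x / 0 = 0\<close>\<close>
    then show ?thesis
      unfolding boundary_term_def boundary_factor_def exps z_def[symmetric]
      by (simp add: power_inverse)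
  next
    case False
    then have "(1 - of_real q0 * inverse z) / (1 - inverse z ^ 2) = - (z * (z - of_real q0) / (1 - z\<^sup>2))"
      using z by (simp add: field_simps power2_eq_square)
    then show ?thesis
      unfolding boundary_term_def boundary_factor_def exps z_def[symmetric]
      by (simp add: algebra_simps)
  qed
qed

lemma boundary_term_reflection:
  assumes "\<bar>q0\<bar> < 1" "\<bar>q1\<bar> < 1"
    and bethe: "exp (\<i> * of_real t) ^ (2 * Suc m) = scattering q0 t * scattering q1 t * S"
  shows "boundary_term q0 q1 m (- t) * S = - boundary_term q0 q1 m t"
proof -
  define z where "z = exp (\<i> * of_real t)"
  have "norm z = 1"
    by (simp add: z_def)
  then have z: "z \<noteq> 0" "z - of_real q0 \<noteq> 0" "z - of_real q1 \<noteq> 0"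
    using unit_minus_of_real_neq_0 assms(1,2) by fastforce+
  then have "scattering q0 t * (z - of_real q0) = 1 - of_real q0 * z"
    "scattering q1 t * (z - of_real q1) = 1 - of_real q1 * z"
    by (simp_all add: scattering_def z_def)
  then have S: "(1 - of_real q0 * z) * (1 - of_real q1 * z) * S
      = z ^ (2 * Suc m) * ((z - of_real q0) * (z - of_real q1))"
    using bethe unfolding z_def[symmetric] by (simp add: ac_simps)
  have "boundary_term q0 q1 m (- t) * S
      = (1 - of_real q0 * z) * (1 - of_real q1 * z) * S / ((1 - z\<^sup>2) * z ^ Suc m)"
    unfolding boundary_term_closed_form(2)[of q0 q1 m t] z_def[symmetric] by simp
  also have "\<dots> = z ^ Suc m * (z ^ Suc m * ((z - of_real q0) * (z - of_real q1)))
      / (z ^ Suc m * (1 - z\<^sup>2))"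
    unfolding S mult_2 power_add by (simp only: ac_simps)
  also have "\<dots> = - boundary_term q0 q1 m t"
    unfolding boundary_term_closed_form(1)[of q0 q1 m t] z_def[symmetric] using z(1)
    by (simp only: mult_divide_mult_cancel_left_if power_eq_0_iff) (simp add: ac_simps)
  finally show ?thesis .
qed

lemma boundary_term_pair_product_uminus:
  assumes "\<bar>q\<bar> < 1" "\<bar>q0\<bar> < 1" "\<bar>q1\<bar> < 1"
    and "exp (\<i> * of_real t) ^ (2 * Suc m) = scattering q0 t * scattering q1 t
           * (\<Prod>k<n. scattering q (t + y k) * scattering q (t - y k))"
  shows "boundary_term q0 q1 m (- t) * pair_product q n y (- t)
           = - (boundary_term q0 q1 m t * pair_product q n y t)"
  using boundary_term_reflection[OF assms(2-4)]
  unfolding pair_product_uminus[OF assms(1)] by (simp add: ac_simps)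

lemma scattering_pair_sign:
  assumes "e \<in> {1, -1}"
  shows "scattering q (t + e * u) * scattering q (t - e * u) = scattering q (t + u) * scattering q (t - u)"
  using assms by (auto simp: mult.commute)

lemma prod_diff_permutes_image_0:
  assumes "\<sigma> permutes {..<Suc n}"
  shows "(\<Prod>k\<in>{..<Suc n} - {\<sigma> 0}. g k) = (\<Prod>k<n. g (\<sigma> (Suc k)))"
proof -
  have inj: "inj \<sigma>"
    using assms by (rule permutes_inj)
  have "{..<Suc n} - {\<sigma> 0} = \<sigma> ` ({..<Suc n} - {0})"
    using inj by (simp add: image_set_diff permutes_image[OF assms])
  also have "{..<Suc n} - {0} = Suc ` {..<n}"
    by (auto simp: image_iff less_Suc_eq_0_disj)
  finally have "{..<Suc n} - {\<sigma> 0} = (\<sigma> \<circ> Suc) ` {..<n}"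
    by (simp add: image_comp)
  moreover have "inj (\<sigma> \<circ> Suc)"
    using inj by (simp add: inj_compose)
  ultimately show ?thesis
    using prod.reindex[of "\<sigma> \<circ> Suc" "{..<n}" g] by (simp add: inj_on_subset)
qed

lemma sum_PiE_signs_eq_0:
  fixes F :: "('a \<Rightarrow> real) \<Rightarrow> 'b::ab_group_add"
  assumes "i \<in> I" and "\<And>\<epsilon>. \<epsilon> \<in> I \<rightarrow>\<^sub>E {1, -1} \<Longrightarrow> F (\<epsilon>(i := - \<epsilon> i)) = - F \<epsilon>"
  shows "(\<Sum>\<epsilon>\<in>I \<rightarrow>\<^sub>E {1, -1}. F \<epsilon>) = 0"
proof (rule sum_involution_eq_0[where h = "\<lambda>\<epsilon>. \<epsilon>(i := - \<epsilon> i)"])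
  fix \<epsilon> :: "'a \<Rightarrow> real"
  assume \<epsilon>: "\<epsilon> \<in> I \<rightarrow>\<^sub>E {1, -1}"
  then have sign: "\<epsilon> i = 1 \<or> \<epsilon> i = -1"
    using assms(1) by (auto simp: PiE_iff)
  show "\<epsilon>(i := - \<epsilon> i) \<noteq> \<epsilon>"
  proof
    assume "\<epsilon>(i := - \<epsilon> i) = \<epsilon>"
    then have "- \<epsilon> i = \<epsilon> i"
      by (metis fun_upd_same)
    with sign show False
      by auto
  qed
  show "\<epsilon>(i := - \<epsilon> i) \<in> I \<rightarrow>\<^sub>E {1, -1}"
    using \<epsilon> assms(1) by (auto simp: PiE_iff extensional_def)
  show "(\<epsilon>(i := - \<epsilon> i))(i := - (\<epsilon>(i := - \<epsilon> i)) i) = \<epsilon>"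
    by simp
  show "F (\<epsilon>(i := - \<epsilon> i)) + F \<epsilon> = 0"
    using assms(2)[OF \<epsilon>] by simp
qed

lemma sum_signs_eq_0_of_bethe:
  fixes \<xi> :: "nat \<Rightarrow> real"
  assumes q: "\<bar>q\<bar> < 1" "\<bar>q0\<bar> < 1" "\<bar>q1\<bar> < 1"
    and \<sigma>: "\<sigma> permutes {..<Suc n}"
    and bethe: "exp (\<i> * of_real (\<xi> (\<sigma> 0))) ^ (2 * Suc m)
      = scattering q0 (\<xi> (\<sigma> 0)) * scattering q1 (\<xi> (\<sigma> 0))
        * (\<Prod>k\<in>{..<Suc n} - {\<sigma> 0}. scattering q (\<xi> (\<sigma> 0) + \<xi> k) * scattering q (\<xi> (\<sigma> 0) - \<xi> k))"
    and \<mu>: "\<mu> 0 = int m + 1"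
  shows "(\<Sum>\<epsilon>\<in>{..<Suc n} \<rightarrow>\<^sub>E {1, -1}. Cb (Suc n) (\<lambda>j. \<epsilon> j * \<xi> (\<sigma> j)) q q0 *
      (plane_wave (Suc n) (\<lambda>j. \<epsilon> j * \<xi> (\<sigma> j)) \<mu>
       - of_real q1 * plane_wave (Suc n) (\<lambda>j. \<epsilon> j * \<xi> (\<sigma> j)) (\<mu>(0 := \<mu> 0 - 1)))) = 0"
proof -
  define t where "t = \<xi> (\<sigma> 0)"
  define y where "y \<epsilon> = (\<lambda>k. \<epsilon> (Suc k) * \<xi> (\<sigma> (Suc k)))" for \<epsilon> :: "nat \<Rightarrow> real"
  define \<Phi> where "\<Phi> \<epsilon> s = boundary_term q0 q1 m s * pair_product q n (y \<epsilon>) s" for \<epsilon> s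
  define R where "R \<epsilon> = Cb n (y \<epsilon>) q q0 * plane_wave n (y \<epsilon>) (\<lambda>k. \<mu> (Suc k))" for \<epsilon>
  have summand: "Cb (Suc n) (\<lambda>j. \<epsilon> j * \<xi> (\<sigma> j)) q q0 *
      (plane_wave (Suc n) (\<lambda>j. \<epsilon> j * \<xi> (\<sigma> j)) \<mu>
       - of_real q1 * plane_wave (Suc n) (\<lambda>j. \<epsilon> j * \<xi> (\<sigma> j)) (\<mu>(0 := \<mu> 0 - 1)))
    = \<Phi> \<epsilon> (\<epsilon> 0 * t) * R \<epsilon>" for \<epsilon>
    unfolding Cb_mult_plane_wave_diff[where \<mu> = \<mu>, OF \<mu>] \<Phi>_def R_def y_def t_def
    by (simp add: mult.assoc)
  have flip: "\<Phi> (\<epsilon>(0 := v)) = \<Phi> \<epsilon>" "R (\<epsilon>(0 := v)) = R \<epsilon>" for \<epsilon> v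
    by (simp_all add: \<Phi>_def R_def y_def fun_eq_iff)
  have antisym: "\<Phi> \<epsilon> (- t) = - \<Phi> \<epsilon> t" if \<epsilon>: "\<epsilon> \<in> {..<Suc n} \<rightarrow>\<^sub>E {1, -1}" for \<epsilon>
  proof -
    have "scattering q (t + y \<epsilon> k) * scattering q (t - y \<epsilon> k)
        = scattering q (t + \<xi> (\<sigma> (Suc k))) * scattering q (t - \<xi> (\<sigma> (Suc k)))" if "k < n" for k
      unfolding y_def using \<epsilon> that by (intro scattering_pair_sign) (auto simp: PiE_iff)
    then have "exp (\<i> * of_real t) ^ (2 * Suc m) = scattering q0 t * scattering q1 t
        * (\<Prod>k<n. scattering q (t + y \<epsilon> k) * scattering q (t - y \<epsilon> k))"
      using bethe unfolding prod_diff_permutes_image_0[OF \<sigma>] t_def[symmetric] by simp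
    then show ?thesis
      unfolding \<Phi>_def using boundary_term_pair_product_uminus[OF q] by simp
  qed
  show ?thesis
    unfolding summand
  proof (rule sum_PiE_signs_eq_0[where i = 0])
    fix \<epsilon> :: "nat \<Rightarrow> real"
    assume \<epsilon>: "\<epsilon> \<in> {..<Suc n} \<rightarrow>\<^sub>E {1, -1}"
    then have "\<epsilon> 0 = 1 \<or> \<epsilon> 0 = -1"
      by (auto simp: PiE_iff)
    then show "\<Phi> (\<epsilon>(0 := - \<epsilon> 0)) ((\<epsilon>(0 := - \<epsilon> 0)) 0 * t) * R (\<epsilon>(0 := - \<epsilon> 0))
        = - (\<Phi> \<epsilon> (\<epsilon> 0 * t) * R \<epsilon>)"
      using antisym[OF \<epsilon>] by (auto simp: flip)
  qed simp
qed

lemma bethe_scattering_form: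
  "exp (2 * \<i> * of_nat (m + 1) * of_real t) =
       (1 - of_real q0 * exp (\<i> * of_real t)) / (exp (\<i> * of_real t) - of_real q0)
     * (1 - of_real q1 * exp (\<i> * of_real t)) / (exp (\<i> * of_real t) - of_real q1)
     * (\<Prod>k\<in>K.
          (1 - of_real q * exp (\<i> * of_real (t + u k))) / (exp (\<i> * of_real (t + u k)) - of_real q)
        * (1 - of_real q * exp (\<i> * of_real (t - u k))) / (exp (\<i> * of_real (t - u k)) - of_real q))
   \<longleftrightarrow> exp (\<i> * of_real t) ^ (2 * Suc m) = scattering q0 t * scattering q1 t
     * (\<Prod>k\<in>K. scattering q (t + u k) * scattering q (t - u k))"
proof -
  have "exp (2 * \<i> * of_nat (m + 1) * of_real t) = exp (of_nat (2 * Suc m) * (\<i> * of_real t))"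
    by (simp add: algebra_simps)
  then show ?thesis
    unfolding exp_of_nat_mult by (simp add: scattering_def)
qed

theorem mainTheorem10:
  fixes n m :: nat and q q0 q1 :: real and \<xi> :: "nat \<Rightarrow> real" and \<mu> :: "nat \<Rightarrow> int"
  assumes "n \<ge> 1" and "m > 0"
    and "\<bar>q\<bar> < 1" and "\<bar>q0\<bar> < 1" and "\<bar>q1\<bar> < 1"
    and "\<forall>j<n. \<forall>z::int. \<xi> j \<noteq> pi * of_int z"
    and "\<forall>j<n. \<forall>k<n. j \<noteq> k \<longrightarrow> (\<forall>z::int. \<xi> j + \<xi> k \<noteq> 2 * pi * of_int z \<and> \<xi> j - \<xi> k \<noteq> 2 * pi * of_int z)"
    and "\<forall>j<n. exp (2 * \<i> * of_nat (m + 1) * of_real (\<xi> j)) =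
           (1 - of_real q0 * exp (\<i> * of_real (\<xi> j))) / (exp (\<i> * of_real (\<xi> j)) - of_real q0)
         * (1 - of_real q1 * exp (\<i> * of_real (\<xi> j))) / (exp (\<i> * of_real (\<xi> j)) - of_real q1)
         * (\<Prod>k\<in>{..<n} - {j}.
              (1 - of_real q * exp (\<i> * of_real (\<xi> j + \<xi> k))) / (exp (\<i> * of_real (\<xi> j + \<xi> k)) - of_real q)
            * (1 - of_real q * exp (\<i> * of_real (\<xi> j - \<xi> k))) / (exp (\<i> * of_real (\<xi> j - \<xi> k)) - of_real q))"
    and "\<mu> 0 = int m + 1"
  shows "Pb n \<mu> \<xi> q q0 = of_real q1 * Pb n (\<mu>(0 := \<mu> 0 - 1)) \<xi> q q0"
proof -
  obtain n' where n: "n = Suc n'"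
    using assms(1) by (cases n) auto
  have bethe: "exp (\<i> * of_real (\<xi> j)) ^ (2 * Suc m)
      = scattering q0 (\<xi> j) * scattering q1 (\<xi> j)
        * (\<Prod>k\<in>{..<Suc n'} - {j}. scattering q (\<xi> j + \<xi> k) * scattering q (\<xi> j - \<xi> k))"
    if "j < Suc n'" for j
    using assms(8) that unfolding n bethe_scattering_form by blast
  have \<sigma>0: "\<sigma> 0 < Suc n'" if "\<sigma> permutes {..<Suc n'}" for \<sigma>
    using permutes_in_image[OF that, of 0] by simp
  have "Pb n \<mu> \<xi> q q0 - of_real q1 * Pb n (\<mu>(0 := \<mu> 0 - 1)) \<xi> q q0
     = (\<Sum>\<sigma> | \<sigma> permutes {..<Suc n'}. \<Sum>\<epsilon>\<in>{..<Suc n'} \<rightarrow>\<^sub>E {1, -1}.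
         Cb (Suc n') (\<lambda>j. \<epsilon> j * \<xi> (\<sigma> j)) q q0 *
         (plane_wave (Suc n') (\<lambda>j. \<epsilon> j * \<xi> (\<sigma> j)) \<mu>
          - of_real q1 * plane_wave (Suc n') (\<lambda>j. \<epsilon> j * \<xi> (\<sigma> j)) (\<mu>(0 := \<mu> 0 - 1))))"
    by (simp add: n Pb_def plane_wave_def sum_distrib_left right_diff_distrib sum_subtractf ac_simps)
  also have "\<dots> = 0"
    by (rule sum.neutral, intro ballI sum_signs_eq_0_of_bethe[where m = m] assms(3-5,9) bethe)
      (simp_all add: \<sigma>0)
  finally show ?thesis
    by simp
qed

end
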